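(* Let $g:[0,\infty)\to\mathbb{R}$ be any function and define $\hat H$ on finite sequences of nonnegative reals with positive sum by $\hat H(a_1,\ldots,a_n)=g(a_1)+\cdots+g(a_n)-g(a_1+\cdots+a_n)$. Define $D(a,b)=g(ab)-a\,g(b)-b\,g(a)$ for $a,b\ge 0$. Then $\hat H$ is homogeneous (i.e. $\hat H(ca_1,\ldots,ca_n)=c\,\hat H(a_1,\ldots,a_n)$ for all $c>0$) if and only if for every $a>0$ the function $b\mapsto D(a,b)$ is additive on $[0,\infty)$, i.e. $D(a,b_1+b_2)=D(a,b_1)+D(a,b_2)$ for all $b_1,b_2\ge0$. Moreover, if $\hat H$ is homogeneous and $g(1)=0$, then $g(ab)=a\,g(b)+b\,g(a)$ for all nonnegative rational numbers $a,b$. *)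

theory Defs
  imports Complex_Main
begin

text \<open>g is given on all reals; only its values on [0,inf) are ever used.\<close>

definition Hhat :: "(real \<Rightarrow> real) \<Rightarrow> real list \<Rightarrow> real" where
  "Hhat g as = sum_list (map g as) - g (sum_list as)"

definition Hhat_homogeneous :: "(real \<Rightarrow> real) \<Rightarrow> bool" where
  "Hhat_homogeneous g \<longleftrightarrow>
     (\<forall>as c. (\<forall>x\<in>set as. x \<ge> 0) \<and> sum_list as > 0 \<and> c > 0 \<longrightarrow>
        Hhat g (map (\<lambda>x. c * x) as) = c * Hhat g as)"

definition Dg :: "(real \<Rightarrow> real) \<Rightarrow> real \<Rightarrow> real \<Rightarrow> real" where
  "Dg g a b = g (a * b) - a * g b - b * g a"

end

theory Submission
  imports Defs
begin

(* For a pair, Hhat g [x, y] = g x + g y - g (x + y), and a direct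
   computation gives
     Dg g a (b1 + b2) - Dg g a b1 - Dg g a b2 = a * Hhat g [b1, b2] - Hhat g [a*b1, a*b2].
   Hence additivity of b \<mapsto> Dg g a b on [0,inf) is exactly homogeneity of Hhat
   on pairs with scaling factor a.  Both conditions force g 0 = 0, and then
   homogeneity on pairs extends to arbitrary lists by induction, because Hhat of
   a list x # xs splits as Hhat of xs plus Hhat of the pair [x, sum xs].
   For the second claim, an additive function f on [0,inf) satisfies
   f b = b * f 1 for every nonnegative rational b (Cauchy's argument); applied
   to f = Dg g a with Dg g a 1 = -a * g 1 = 0 this gives Dg g a b = 0, i.e. the
   Leibniz rule g (a*b) = a * g b + b * g a. *)

definition Dg_additive :: "(real \<Rightarrow> real) \<Rightarrow> real \<Rightarrow> bool" where
  "Dg_additive g a \<longleftrightarrow>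
     (\<forall>b1 b2. b1 \<ge> 0 \<longrightarrow> b2 \<ge> 0 \<longrightarrow> Dg g a (b1 + b2) = Dg g a b1 + Dg g a b2)"

lemma Hhat_Cons: "Hhat g (x # xs) = Hhat g xs + Hhat g [x, sum_list xs]"
  by (simp add: Hhat_def)

lemma Dg_additivity_defect:
  "Dg g a (b1 + b2) - Dg g a b1 - Dg g a b2 = a * Hhat g [b1, b2] - Hhat g [a * b1, a * b2]"
  by (simp add: Dg_def Hhat_def algebra_simps)

text \<open>Homogeneity of Hhat forces g 0 = 0 (scale the list [0, 1] by 2).\<close>

lemma homogeneous_imp_g0:
  assumes "Hhat_homogeneous g"
  shows "g 0 = 0"
proof -
  have "Hhat g (map (\<lambda>x. 2 * x) [0, 1]) = 2 * Hhat g [0, 1]"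
    using assms unfolding Hhat_homogeneous_def
    by (elim allE[of _ "[0, 1]"] allE[of _ 2]) simp
  then show ?thesis by (simp add: Hhat_def)
qed

lemma Dg_additive_imp_g0:
  assumes "Dg_additive g a" and "a \<noteq> 1"
  shows "g 0 = 0"
proof -
  have "Dg g a (0 + 0) = Dg g a 0 + Dg g a 0"
    using assms(1) unfolding Dg_additive_def by blast
  then have "(1 - a) * g 0 = 0" by (simp add: Dg_def algebra_simps)
  then show ?thesis using assms(2) by simp
qed

text \<open>Homogeneity on pairs of nonnegative reals implies homogeneity on all lists,
  provided g 0 = 0 (needed for the empty list).\<close>

lemma Hhat_homogeneous_from_pairs:
  assumes g0: "g 0 = 0"
    and pairs: "\<And>x y. x \<ge> 0 \<Longrightarrow> y \<ge> 0 \<Longrightarrow> Hhat g [c * x, c * y] = c * Hhat g [x, y]"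
    and nonneg: "\<forall>x\<in>set xs. x \<ge> 0"
  shows "Hhat g (map (\<lambda>x. c * x) xs) = c * Hhat g xs"
  using nonneg
proof (induction xs)
  case Nil
  then show ?case using g0 by (simp add: Hhat_def)
next
  case (Cons x xs)
  let ?cxs = "map (\<lambda>x. c * x) xs"
  have scaled_sum: "sum_list ?cxs = c * sum_list xs"
    by (simp add: sum_list_const_mult)
  have "sum_list xs \<ge> 0" using Cons.prems by (simp add: sum_list_nonneg)
  then have pair: "Hhat g [c * x, c * sum_list xs] = c * Hhat g [x, sum_list xs]"
    using pairs Cons.prems by simp
  have "Hhat g (map (\<lambda>x. c * x) (x # xs)) = Hhat g ?cxs + Hhat g [c * x, sum_list ?cxs]"
    using Hhat_Cons[of g "c * x" ?cxs] by simp
  also have "\<dots> = c * Hhat g xs + c * Hhat g [x, sum_list xs]"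
    using Cons pair scaled_sum by simp
  also have "\<dots> = c * Hhat g (x # xs)"
    using Hhat_Cons[of g x xs] by (simp add: algebra_simps)
  finally show ?case .
qed

lemma homogeneous_iff_Dg_additive:
  "Hhat_homogeneous g \<longleftrightarrow> (\<forall>a>0. Dg_additive g a)"
proof
  assume hom: "Hhat_homogeneous g"
  have g0: "g 0 = 0" using hom by (rule homogeneous_imp_g0)
  show "\<forall>a>0. Dg_additive g a"
  proof (intro allI impI)
    fix a :: real assume a: "a > 0"
    have "Dg g a (b1 + b2) = Dg g a b1 + Dg g a b2" if b: "b1 \<ge> 0" "b2 \<ge> 0" for b1 b2
    proof (cases "b1 + b2 > 0")
      case True
      then have "Hhat g [a * b1, a * b2] = a * Hhat g [b1, b2]"
        using hom a b unfolding Hhat_homogeneous_def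
        by (elim allE[of _ "[b1, b2]"] allE[of _ a]) simp
      then show ?thesis using Dg_additivity_defect[of g a b1 b2] by linarith
    next
      case False
      then have "b1 = 0" "b2 = 0" using b by auto
      then show ?thesis using g0 by (simp add: Dg_def)
    qed
    then show "Dg_additive g a" unfolding Dg_additive_def by blast
  qed
next
  assume add: "\<forall>a>0. Dg_additive g a"
  have "Dg_additive g 2" using add by simp
  then have g0: "g 0 = 0" by (rule Dg_additive_imp_g0) simp
  have "Hhat g (map (\<lambda>x. c * x) xs) = c * Hhat g xs"
    if "\<forall>x\<in>set xs. x \<ge> 0" "c > 0" for xs and c :: real
  proof (rule Hhat_homogeneous_from_pairs[where g = g and c = c, OF g0 _ that(1)])
    fix x y :: real assume "x \<ge> 0" "y \<ge> 0"
    then have "Dg g c (x + y) = Dg g c x + Dg g c y"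
      using add \<open>c > 0\<close> unfolding Dg_additive_def by blast
    then show "Hhat g [c * x, c * y] = c * Hhat g [x, y]"
      using Dg_additivity_defect[of g c x y] by linarith
  qed
  then show "Hhat_homogeneous g" unfolding Hhat_homogeneous_def by blast
qed

lemma additive_nonneg_of_nat_mult:
  fixes f :: "real \<Rightarrow> real"
  assumes add: "\<And>x y. x \<ge> 0 \<Longrightarrow> y \<ge> 0 \<Longrightarrow> f (x + y) = f x + f y"
    and x: "x \<ge> 0"
  shows "f (real n * x) = real n * f x"
proof (induction n)
  case 0
  have "f 0 = f 0 + f 0" using add[of 0 0] by simp
  then have "f 0 = 0" by linarith
  then show ?case by simp
next
  case (Suc n)
  have "f (real (Suc n) * x) = f (real n * x + x)" by (simp add: algebra_simps)
  also have "\<dots> = f (real n * x) + f x" using add[of "real n * x" x] x by simp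
  finally show ?case using Suc by (simp add: algebra_simps)
qed

lemma additive_nonneg_rational_linear:
  fixes f :: "real \<Rightarrow> real"
  assumes add: "\<And>x y. x \<ge> 0 \<Longrightarrow> y \<ge> 0 \<Longrightarrow> f (x + y) = f x + f y"
    and "b \<in> \<rat>" "b \<ge> 0"
  shows "f b = b * f 1"
proof -
  obtain p q :: nat where q: "q \<noteq> 0" and "\<bar>b\<bar> = real p / real q"
    using Rats_abs_nat_div_natE[OF \<open>b \<in> \<rat>\<close>] by metis
  then have qb: "real q * b = real p" using \<open>b \<ge> 0\<close> by simp
  have scale: "f (real n * x) = real n * f x" if "x \<ge> 0" for n x
    using additive_nonneg_of_nat_mult[where f = f] add that by blast
  have "real q * f b = f (real q * b)"
    using scale \<open>b \<ge> 0\<close> by simp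
  also have "\<dots> = real p * f 1"
    using scale[of 1 p] qb by simp
  also have "\<dots> = real q * (b * f 1)" using qb by simp
  finally show ?thesis using q by simp
qed

text \<open>Second claim: under homogeneity and g 1 = 0, g obeys the Leibniz rule on the
  nonnegative rationals, since Dg g a is additive and vanishes at 1.\<close>

lemma Leibniz_rule_on_rationals:
  assumes hom: "Hhat_homogeneous g" and g1: "g 1 = 0"
    and "a \<in> \<rat>" "b \<in> \<rat>" "a \<ge> 0" "b \<ge> 0"
  shows "g (a * b) = a * g b + b * g a"
proof -
  have "Dg g a b = 0"
  proof (cases "a = 0")
    case True
    then show ?thesis using homogeneous_imp_g0[OF hom] by (simp add: Dg_def)
  next
    case False
    then have "a > 0" using \<open>a \<ge> 0\<close> by simp
    then have "Dg_additive g a"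
      using hom homogeneous_iff_Dg_additive by blast
    then have "Dg g a b = b * Dg g a 1"
    proof (intro additive_nonneg_rational_linear[where f = "Dg g a"])
      show "Dg g a (x + y) = Dg g a x + Dg g a y" if "Dg_additive g a" "x \<ge> 0" "y \<ge> 0" for x y
        using that unfolding Dg_additive_def by blast
    qed (use \<open>b \<in> \<rat>\<close> \<open>b \<ge> 0\<close> in auto)
    then show ?thesis using g1 by (simp add: Dg_def)
  qed
  then show ?thesis by (simp add: Dg_def)
qed

theorem mainTheorem3:
  fixes g :: "real \<Rightarrow> real"
  shows "(Hhat_homogeneous g \<longleftrightarrow>
           (\<forall>a>0. \<forall>b1 b2. b1 \<ge> 0 \<longrightarrow> b2 \<ge> 0 \<longrightarrow>
              Dg g a (b1 + b2) = Dg g a b1 + Dg g a b2))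
       \<and> (Hhat_homogeneous g \<longrightarrow> g 1 = 0 \<longrightarrow>
           (\<forall>a\<in>\<rat>. \<forall>b\<in>\<rat>. a \<ge> 0 \<longrightarrow> b \<ge> 0 \<longrightarrow> g (a * b) = a * g b + b * g a))"
proof (intro conjI impI ballI)
  show "Hhat_homogeneous g \<longleftrightarrow> (\<forall>a>0. \<forall>b1 b2. b1 \<ge> 0 \<longrightarrow> b2 \<ge> 0 \<longrightarrow>
          Dg g a (b1 + b2) = Dg g a b1 + Dg g a b2)"
    using homogeneous_iff_Dg_additive[of g] unfolding Dg_additive_def .
next
  fix a b :: real
  assume "Hhat_homogeneous g" "g 1 = 0" "a \<in> \<rat>" "b \<in> \<rat>" "a \<ge> 0" "b \<ge> 0"
  then show "g (a * b) = a * g b + b * g a" by (rule Leibniz_rule_on_rationals)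
qed

end
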